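(* Let $N\ge2$ be an integer, $b>0$, $h=b/N$, and let $A_h=h^2B_h$, where $B_h=(b_{i,j})_{i,j=1}^{N-1}$ is the symmetric Toeplitz matrix with $b_{i,i}=\frac{2N}{3}-1$, $b_{i,j}=\frac N6-1$ if $|i-j|=1$, and $b_{i,j}=-1$ if $|i-j|\ge2$. Let $D_h$ be the diagonal of $A_h$. Then $1\le\lambda_{\max}(D_h^{-1}A_h)<3$.
   Context: $A_h$ is the stiffness matrix of the piecewise linear finite element discretization on the uniform mesh of $(0,b)$ of the nonlocal operator $u\mapsto\int_0^b[u(x)-u(y)]dy$ (constant kernel) with zero exterior condition. *)

theory Defs
  imports "Jordan_Normal_Form.Char_Poly"
begin

definition Bh :: "nat \<Rightarrow> real mat" where
  "Bh N = mat (N - 1) (N - 1) (\<lambda>(i, j).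
     if i = j then 2 * real N / 3 - 1
     else if i = j + 1 \<or> j = i + 1 then real N / 6 - 1
     else -1)"

definition Ah :: "real \<Rightarrow> nat \<Rightarrow> real mat" where
  "Ah b N = ((b / real N)^2) \<cdot>\<^sub>m Bh N"

definition diag_part :: "real mat \<Rightarrow> real mat" where
  "diag_part A = mat_diag (dim_row A) (\<lambda>i. A $$ (i, i))"

definition diag_inv :: "real mat \<Rightarrow> real mat" where
  "diag_inv D = mat_diag (dim_row D) (\<lambda>i. 1 / D $$ (i, i))"

definition lambda_max :: "real mat \<Rightarrow> real" where
  "lambda_max M = Max {l. eigenvalue M l}"

end

theory Submission
  imports Defs "HOL-Analysis.Function_Topology" "Jordan_Normal_Form.Spectral_Radius"
begin

text \<open>With d = 2N/3 - 1 the common diagonal entry of B_h, the matrix D_h^{-1} A_h is B_h / d,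
  a real symmetric matrix, so its largest eigenvalue is the maximum of its Rayleigh quotient: a
  maximiser exists on the compact unit sphere, and it is an eigenvector because the nonnegative
  form lambda |u|^2 - u.Bu vanishes there and hence has zero first variation. The first unit
  vector has Rayleigh quotient 1. For the upper bound write B_h = (2N/3) I + (N/6) T - J with T
  the adjacency matrix of a path and J the all-ones matrix; u.Tu \<le> 2|u|^2 and u.Ju \<ge> 0 give
  u.B_h u \<le> N |u|^2 < 3d |u|^2 for N \<ge> 4, and N = 2, 3 are checked by hand.\<close>

lemma quadratic_form_sum:
  fixes A :: "'a::comm_semiring_0 mat"
  assumes "A \<in> carrier_mat n n" and "v \<in> carrier_vec n"
  shows "v \<bullet> (A *\<^sub>v v) = (\<Sum>i<n. \<Sum>j<n. A $$ (i, j) * v $ i * v $ j)"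
  using assms by (auto simp: scalar_prod_def sum_distrib_left atLeast0LessThan mult_ac intro!: sum.cong)

lemma scalar_prod_self_sum:
  fixes v :: "real vec"
  shows "v \<in> carrier_vec n \<Longrightarrow> v \<bullet> v = (\<Sum>i<n. (v $ i)^2)"
  unfolding scalar_prod_def power2_eq_square by (auto simp: atLeast0LessThan)

lemma scalar_prod_self_pos:
  fixes v :: "real vec"
  shows "v \<in> carrier_vec n \<Longrightarrow> v \<noteq> 0\<^sub>v n \<Longrightarrow> v \<bullet> v > 0"
  using conjugate_square_greater_0_vec[of v n] by simp

lemma unit_vec_quadratic_form:
  fixes A :: "'a::comm_semiring_1 mat"
  assumes "A \<in> carrier_mat n n" and "i < n"
  shows "unit_vec n i \<bullet> (A *\<^sub>v unit_vec n i) = A $$ (i, i)"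
  using assms by simp

lemma symmetric_quadratic_form_add:
  fixes A :: "real mat"
  assumes A: "A \<in> carrier_mat n n" "transpose_mat A = A"
    and x: "x \<in> carrier_vec n" and y: "y \<in> carrier_vec n"
  shows "(x + y) \<bullet> (A *\<^sub>v (x + y)) = x \<bullet> (A *\<^sub>v x) + 2 * (y \<bullet> (A *\<^sub>v x)) + y \<bullet> (A *\<^sub>v y)"
proof -
  have "x \<bullet> (A *\<^sub>v y) = (A *\<^sub>v x) \<bullet> y"
    using transpose_vec_mult_scalar[OF A(1) y x] A(2) by simp
  also have "\<dots> = y \<bullet> (A *\<^sub>v x)"
    using A x y by (intro comm_scalar_prod[of _ n]) auto
  finally have "x \<bullet> (A *\<^sub>v y) = y \<bullet> (A *\<^sub>v x)" .
  then show ?thesis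
    using A x y by (simp add: mult_add_distrib_mat_vec[of A n n] add_scalar_prod_distrib[of _ n]
        scalar_prod_add_distrib[of _ n])
qed

lemma nonpos_if_linear_le_quadratic:
  fixes a c :: real
  assumes le: "\<And>t. t > 0 \<Longrightarrow> t * a \<le> t^2 * c"
  shows "a \<le> 0"
proof (rule ccontr)
  assume "\<not> a \<le> 0"
  define t where "t = a / (\<bar>c\<bar> + 1)"
  have t: "t > 0" using \<open>\<not> a \<le> 0\<close> by (simp add: t_def)
  have "t * a \<le> t * (t * c)" using le[OF t] by (simp add: power2_eq_square mult_ac)
  then have "a \<le> t * c" using t by simp
  also have "\<dots> \<le> t * \<bar>c\<bar>" using t by (simp add: abs_ge_self)
  also have "\<dots> < a" using \<open>\<not> a \<le> 0\<close> by (simp add: t_def field_simps)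
  finally show False by simp
qed

lemma rayleigh_maximizer_is_eigenvector:
  fixes A :: "real mat"
  assumes A: "A \<in> carrier_mat n n" "transpose_mat A = A"
    and bound: "\<And>u. u \<in> carrier_vec n \<Longrightarrow> u \<bullet> (A *\<^sub>v u) \<le> lam * (u \<bullet> u)"
    and v: "v \<in> carrier_vec n" and attained: "v \<bullet> (A *\<^sub>v v) = lam * (v \<bullet> v)"
  shows "A *\<^sub>v v = lam \<cdot>\<^sub>v v"
proof -
  define gap where "gap u = lam * (u \<bullet> u) - u \<bullet> (A *\<^sub>v u)" for u
  define r where "r = lam \<cdot>\<^sub>v v - A *\<^sub>v v"
  have r: "r \<in> carrier_vec n" using A v by (simp add: r_def)
  have gap_add: "gap (v + y) = 2 * (y \<bullet> r) + gap y" if y: "y \<in> carrier_vec n" for y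
  proof -
    have "(v + y) \<bullet> (v + y) = v \<bullet> v + 2 * (y \<bullet> v) + y \<bullet> y"
      using symmetric_quadratic_form_add[of "1\<^sub>m n" n v y] v y by simp
    moreover have "y \<bullet> r = lam * (y \<bullet> v) - y \<bullet> (A *\<^sub>v v)"
      using A v y by (simp add: r_def scalar_prod_minus_distrib[of _ n])
    ultimately show ?thesis
      using symmetric_quadratic_form_add[OF A v y] attained by (simp add: gap_def algebra_simps)
  qed
  have gap_smult: "gap (c \<cdot>\<^sub>v r) = c^2 * gap r" for c
    using A r by (simp add: gap_def mult_mat_vec[OF A(1) r] power2_eq_square algebra_simps)
  have "s * (r \<bullet> r) \<le> s^2 * (gap r / 4)" if "s > 0" for s
  proof -
    have "0 \<le> gap (v + (- s / 2) \<cdot>\<^sub>v r)" using bound[of "v + (- s / 2) \<cdot>\<^sub>v r"] v r by (simp add: gap_def)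
    also have "\<dots> = - s * (r \<bullet> r) + (s / 2)^2 * gap r"
      using gap_add[of "(- s / 2) \<cdot>\<^sub>v r"] gap_smult[of "- s / 2"] r by (simp add: power2_eq_square)
    finally show ?thesis by (simp add: power2_eq_square field_simps)
  qed
  then have "r \<bullet> r \<le> 0" by (rule nonpos_if_linear_le_quadratic)
  then have "r = 0\<^sub>v n" using scalar_prod_self_pos[OF r] by fastforce
  then have "r $ i = 0" if "i < n" for i using that by simp
  then show ?thesis using A v by (intro eq_vecI) (auto simp: r_def)
qed

lemma continuous_map_attains_max_on_unit_sphere:
  fixes f :: "(nat \<Rightarrow> real) \<Rightarrow> real"
  assumes n: "n > 0"
    and f: "continuous_map (product_topology (\<lambda>_. euclideanreal) {..<n}) euclideanreal f"
  obtains v where "v \<in> {..<n} \<rightarrow>\<^sub>E UNIV" "(\<Sum>i<n. (v i)^2) = 1"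
    "\<And>u. u \<in> {..<n} \<rightarrow>\<^sub>E UNIV \<Longrightarrow> (\<Sum>i<n. (u i)^2) = 1 \<Longrightarrow> f u \<le> f v"
proof -
  define S :: "(nat \<Rightarrow> real) set" where "S = {u \<in> {..<n} \<rightarrow>\<^sub>E UNIV. (\<Sum>i<n. (u i)^2) = 1}"
  let ?X = "product_topology (\<lambda>_. euclideanreal) {..<n}"
  have "compactin ?X (PiE {..<n} (\<lambda>_. {-1..1}))" by (subst compactin_PiE) auto
  moreover have "S \<subseteq> PiE {..<n} (\<lambda>_. {-1..1})"
  proof
    fix u assume u: "u \<in> S"
    have "\<bar>u i\<bar> \<le> 1" if "i < n" for i
    proof -
      have "(u i)^2 \<le> (\<Sum>i<n. (u i)^2)" by (rule member_le_sum) (use that in auto)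
      then show ?thesis using u abs_le_square_iff[of "u i" 1] by (simp add: S_def)
    qed
    then show "u \<in> PiE {..<n} (\<lambda>_. {-1..1})" using u by (auto simp: S_def PiE_iff abs_le_iff)
  qed
  moreover have "closedin ?X S"
  proof -
    have "continuous_map ?X euclideanreal (\<lambda>u. \<Sum>i<n. (u i)^2)"
      by (intro continuous_intros) auto
    from closedin_continuous_map_preimage[OF this, of "{1}"] show ?thesis by (simp add: S_def)
  qed
  ultimately have "compact (f ` S)"
    using image_compactin[OF closed_compactin f] by simp
  moreover have "restrict (\<lambda>i. if i = 0 then 1 else 0) {..<n} \<in> S"
    using n by (simp add: S_def if_distrib[of "\<lambda>x. x^2"] cong: if_cong)
  ultimately obtain v where "v \<in> S" "\<And>u. u \<in> S \<Longrightarrow> f u \<le> f v"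
    using compact_attains_sup[of "f ` S"] by blast
  then show ?thesis by (intro that[of v]) (auto simp: S_def)
qed

lemma quadratic_form_attains_max_on_unit_sphere:
  fixes A :: "real mat"
  assumes A: "A \<in> carrier_mat n n" and n: "n > 0"
  obtains v where "v \<in> carrier_vec n" "v \<bullet> v = 1"
    "\<And>u. u \<in> carrier_vec n \<Longrightarrow> u \<bullet> u = 1 \<Longrightarrow> u \<bullet> (A *\<^sub>v u) \<le> v \<bullet> (A *\<^sub>v v)"
proof -
  define f where "f u = vec n u \<bullet> (A *\<^sub>v vec n u)" for u
  have f_sum: "f u = (\<Sum>i<n. \<Sum>j<n. A $$ (i, j) * u i * u j)" for u
    unfolding f_def using A by (simp add: quadratic_form_sum[of A n])
  have "continuous_map (product_topology (\<lambda>_. euclideanreal) {..<n}) euclideanreal f"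
    unfolding f_sum by (intro continuous_intros) auto
  then obtain w where w: "w \<in> {..<n} \<rightarrow>\<^sub>E UNIV" "(\<Sum>i<n. (w i)^2) = 1"
    and max: "\<And>u. u \<in> {..<n} \<rightarrow>\<^sub>E UNIV \<Longrightarrow> (\<Sum>i<n. (u i)^2) = 1 \<Longrightarrow> f u \<le> f w"
    by (rule continuous_map_attains_max_on_unit_sphere[OF n]) blast
  show ?thesis
  proof
    show "vec n w \<in> carrier_vec n" by simp
    show "vec n w \<bullet> vec n w = 1" using w by (simp add: scalar_prod_self_sum[of _ n])
    fix u :: "real vec" assume u: "u \<in> carrier_vec n" "u \<bullet> u = 1"
    have "vec n (restrict (($) u) {..<n}) = u" using u by auto
    then show "u \<bullet> (A *\<^sub>v u) \<le> vec n w \<bullet> (A *\<^sub>v vec n w)"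
      using max[of "restrict (($) u) {..<n}"] u by (simp add: f_def scalar_prod_self_sum[of _ n])
  qed
qed

lemma quadratic_form_le_of_unit_sphere:
  fixes A :: "real mat"
  assumes A: "A \<in> carrier_mat n n"
    and unit: "\<And>w. w \<in> carrier_vec n \<Longrightarrow> w \<bullet> w = 1 \<Longrightarrow> w \<bullet> (A *\<^sub>v w) \<le> lam"
    and u: "u \<in> carrier_vec n"
  shows "u \<bullet> (A *\<^sub>v u) \<le> lam * (u \<bullet> u)"
proof (cases "u = 0\<^sub>v n")
  case True
  then show ?thesis using A by simp
next
  case False
  define s where "s = sqrt (u \<bullet> u)"
  have pos: "u \<bullet> u > 0" using scalar_prod_self_pos[OF u False] .
  then have s: "s > 0" "s^2 = u \<bullet> u" by (simp_all add: s_def)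
  define w where "w = (1 / s) \<cdot>\<^sub>v u"
  have w: "w \<in> carrier_vec n" using u by (simp add: w_def)
  have "w \<bullet> w = 1" using u s pos by (simp add: w_def power2_eq_square)
  moreover have "w \<bullet> (A *\<^sub>v w) = (u \<bullet> (A *\<^sub>v u)) / s^2"
    using A u by (simp add: w_def mult_mat_vec[OF A u] power2_eq_square)
  ultimately have "(u \<bullet> (A *\<^sub>v u)) / s^2 \<le> lam" using unit[OF w] by simp
  then show ?thesis using s pos by (simp add: pos_divide_le_eq)
qed

lemma symmetric_mat_rayleigh_eigenvalue:
  fixes A :: "real mat"
  assumes A: "A \<in> carrier_mat n n" "transpose_mat A = A" and n: "n > 0"
  obtains lam where "eigenvalue A lam"
    "\<And>u. u \<in> carrier_vec n \<Longrightarrow> u \<bullet> (A *\<^sub>v u) \<le> lam * (u \<bullet> u)"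
proof -
  obtain v where v: "v \<in> carrier_vec n" "v \<bullet> v = 1"
    and max: "\<And>u. u \<in> carrier_vec n \<Longrightarrow> u \<bullet> u = 1 \<Longrightarrow> u \<bullet> (A *\<^sub>v u) \<le> v \<bullet> (A *\<^sub>v v)"
    using quadratic_form_attains_max_on_unit_sphere[OF A(1) n] by blast
  define lam where "lam = v \<bullet> (A *\<^sub>v v)"
  have bound: "u \<bullet> (A *\<^sub>v u) \<le> lam * (u \<bullet> u)" if "u \<in> carrier_vec n" for u
    using quadratic_form_le_of_unit_sphere[OF A(1) max that] by (simp add: lam_def)
  have "A *\<^sub>v v = lam \<cdot>\<^sub>v v"
    using rayleigh_maximizer_is_eigenvector[OF A bound v(1)] v(2) by (simp add: lam_def)
  moreover have "v \<noteq> 0\<^sub>v n" using v by auto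
  ultimately have "eigenvalue A lam"
    using A v by (auto simp: eigenvalue_def eigenvector_def)
  with bound show ?thesis using that by blast
qed

lemma eigenvector_quadratic_form:
  fixes A :: "real mat"
  assumes "eigenvector A w l"
  shows "w \<bullet> (A *\<^sub>v w) = l * (w \<bullet> w)"
  using assms by (auto simp: eigenvector_def)

lemma eigenvalue_le_of_quadratic_form_le:
  fixes A :: "real mat"
  assumes A: "A \<in> carrier_mat n n" and l: "eigenvalue A l"
    and bound: "\<And>u. u \<in> carrier_vec n \<Longrightarrow> u \<bullet> (A *\<^sub>v u) \<le> c * (u \<bullet> u)"
  shows "l \<le> c"
proof -
  obtain w where w: "eigenvector A w l" using l by (auto simp: eigenvalue_def)
  then have "w \<in> carrier_vec n" "w \<noteq> 0\<^sub>v n" using A by (auto simp: eigenvector_def)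
  then show ?thesis
    using bound[of w] eigenvector_quadratic_form[OF w] scalar_prod_self_pos by simp
qed

lemma eigenvalue_less_of_quadratic_form_less:
  fixes A :: "real mat"
  assumes A: "A \<in> carrier_mat n n" and l: "eigenvalue A l"
    and bound: "\<And>u. u \<in> carrier_vec n \<Longrightarrow> u \<noteq> 0\<^sub>v n \<Longrightarrow> u \<bullet> (A *\<^sub>v u) < c * (u \<bullet> u)"
  shows "l < c"
proof -
  obtain w where w: "eigenvector A w l" using l by (auto simp: eigenvalue_def)
  then have "w \<in> carrier_vec n" "w \<noteq> 0\<^sub>v n" using A by (auto simp: eigenvector_def)
  then show ?thesis
    using bound[of w] eigenvector_quadratic_form[OF w] scalar_prod_self_pos by simp
qed

lemma lambda_max_symmetric:
  fixes A :: "real mat"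
  assumes A: "A \<in> carrier_mat n n" "transpose_mat A = A" and n: "n > 0"
  shows "eigenvalue A (lambda_max A)"
    and "u \<in> carrier_vec n \<Longrightarrow> u \<bullet> (A *\<^sub>v u) \<le> lambda_max A * (u \<bullet> u)"
proof -
  obtain lam where lam: "eigenvalue A lam"
    and bound: "\<And>u. u \<in> carrier_vec n \<Longrightarrow> u \<bullet> (A *\<^sub>v u) \<le> lam * (u \<bullet> u)"
    using symmetric_mat_rayleigh_eigenvalue[OF A n] by blast
  have "lambda_max A = lam"
    unfolding lambda_max_def
  proof (rule Max_eqI)
    show "finite {l. eigenvalue A l}" using card_finite_spectrum(1)[OF A(1)] by (simp add: spectrum_def)
    show "l \<le> lam" if "l \<in> {l. eigenvalue A l}" for l
      using eigenvalue_le_of_quadratic_form_le[OF A(1) _ bound] that by simp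
  qed (use lam in simp)
  then show "eigenvalue A (lambda_max A)"
    and "u \<in> carrier_vec n \<Longrightarrow> u \<bullet> (A *\<^sub>v u) \<le> lambda_max A * (u \<bullet> u)"
    using lam bound by auto
qed

lemma bounded_degree_form_le:
  fixes v :: "nat \<Rightarrow> real" and k :: nat
  assumes sym: "\<And>i j. E i j = E j i"
    and deg: "\<And>i. i < n \<Longrightarrow> card {j. j < n \<and> E i j} \<le> k"
  shows "(\<Sum>i<n. \<Sum>j<n. if E i j then v i * v j else 0) \<le> k * (\<Sum>i<n. (v i)^2)"
proof -
  have "(\<Sum>i<n. \<Sum>j<n. if E i j then v i * v j else 0)
      \<le> (\<Sum>i<n. \<Sum>j<n. (if E i j then (v i)^2 else 0) / 2 + (if E i j then (v j)^2 else 0) / 2)"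
  proof (intro sum_mono)
    fix i j
    have "2 * (v i * v j) \<le> (v i)^2 + (v j)^2" using sum_squares_bound[of "v i" "v j"] by simp
    then show "(if E i j then v i * v j else 0)
        \<le> (if E i j then (v i)^2 else 0) / 2 + (if E i j then (v j)^2 else 0) / 2" by auto
  qed
  also have "(\<Sum>i<n. \<Sum>j<n. if E i j then (v j)^2 else 0) = (\<Sum>i<n. \<Sum>j<n. if E i j then (v i)^2 else 0)"
    by (subst sum.swap) (intro sum.cong refl, simp add: sym)
  then have "(\<Sum>i<n. \<Sum>j<n. (if E i j then (v i)^2 else 0) / 2 + (if E i j then (v j)^2 else 0) / 2)
      = (\<Sum>i<n. \<Sum>j<n. if E i j then (v i)^2 else 0)"
    by (simp add: sum.distrib sum_divide_distrib[symmetric])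
  also have "\<dots> = (\<Sum>i<n. (v i)^2 * card {j. j < n \<and> E i j})"
    by (intro sum.cong refl) (simp add: sum.inter_filter[symmetric] lessThan_def)
  also have "\<dots> \<le> (\<Sum>i<n. (v i)^2 * k)"
    using deg by (intro sum_mono mult_left_mono) auto
  finally show ?thesis by (simp add: sum_distrib_left mult.commute)
qed

lemma path_degree_le_2:
  fixes i n :: nat
  shows "card {j. j < n \<and> (i = j + 1 \<or> j = i + 1)} \<le> 2"
proof -
  have "{j. j < n \<and> (i = j + 1 \<or> j = i + 1)} \<subseteq> {i - 1, i + 1}" by auto
  then have "card {j. j < n \<and> (i = j + 1 \<or> j = i + 1)} \<le> card {i - 1, i + 1}"
    by (rule card_mono[rotated]) simp
  also have "\<dots> \<le> 2" by (simp add: card_insert_if)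
  finally show ?thesis .
qed

lemma Bh_carrier: "Bh N \<in> carrier_mat (N - 1) (N - 1)"
  by (simp add: Bh_def)

lemma transpose_smult_mat: "transpose_mat (k \<cdot>\<^sub>m A) = k \<cdot>\<^sub>m transpose_mat A"
  by (rule eq_matI) auto

lemma transpose_Bh: "transpose_mat (Bh N) = Bh N"
  by (rule eq_matI) (auto simp: Bh_def)

lemma diag_inv_diag_part_Ah:
  assumes N: "N \<ge> 2" and b: "b > 0"
  shows "diag_inv (diag_part (Ah b N)) * Ah b N = (1 / (2 * real N / 3 - 1)) \<cdot>\<^sub>m Bh N"
proof -
  define h where "h = (b / real N)^2"
  have h: "h > 0" using N b by (simp add: h_def)
  have d: "2 * real N / 3 - 1 > 0" using N by simp
  have Ah: "Ah b N = h \<cdot>\<^sub>m Bh N" by (simp add: Ah_def h_def)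
  have D: "diag_inv (diag_part (h \<cdot>\<^sub>m Bh N)) = mat_diag (N - 1) (\<lambda>_. 1 / (h * (2 * real N / 3 - 1)))"
    by (rule eq_matI) (auto simp: diag_inv_def diag_part_def Bh_def mat_diag_def)
  show ?thesis
    unfolding Ah D mat_diag_mult_left[OF smult_carrier_mat[OF Bh_carrier]]
    using h d by (intro eq_matI) (auto simp: Bh_def)
qed

lemma Bh_quadratic_form_less:
  assumes N: "N \<ge> 2" and w: "w \<in> carrier_vec (N - 1)" "w \<noteq> 0\<^sub>v (N - 1)"
  shows "w \<bullet> (Bh N *\<^sub>v w) < (2 * real N - 3) * (w \<bullet> w)"
proof -
  let ?n = "N - 1"
  have pos: "w \<bullet> w > 0" using scalar_prod_self_pos[OF w] .
  have form: "w \<bullet> (Bh N *\<^sub>v w) = (\<Sum>i<?n. \<Sum>j<?n. Bh N $$ (i, j) * w $ i * w $ j)"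
    using quadratic_form_sum[OF Bh_carrier w(1)] .
  have norm: "w \<bullet> w = (\<Sum>i<?n. (w $ i)^2)" using scalar_prod_self_sum[OF w(1)] .
  consider "N = 2" | "N = 3" | "N \<ge> 4" using N by linarith
  then show ?thesis
  proof cases
    case 1
    then have "w \<bullet> (Bh N *\<^sub>v w) = (w \<bullet> w) / 3"
      using form norm by (simp add: Bh_def power2_eq_square)
    then show ?thesis using 1 pos by simp
  next
    case 2
    then have "w \<bullet> (Bh N *\<^sub>v w) = w \<bullet> w - w $ 0 * w $ 1" "w \<bullet> w = (w $ 0)^2 + (w $ 1)^2"
      using form norm by (simp_all add: Bh_def numeral_2_eq_2 power2_eq_square)
    moreover have "- (2 * (w $ 0 * w $ 1)) \<le> (w $ 0)^2 + (w $ 1)^2"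
      using sum_squares_bound[of "w $ 0" "- w $ 1"] by simp
    ultimately show ?thesis using 2 pos by simp
  next
    case 3
    let ?adj = "\<lambda>i j. i = j + 1 \<or> j = i + 1"
    have entry: "Bh N $$ (i, j) * w $ i * w $ j = 2 * real N / 3 * (if i = j then w $ i * w $ j else 0)
        + real N / 6 * (if ?adj i j then w $ i * w $ j else 0) - w $ i * w $ j"
      if "i < ?n" "j < ?n" for i j
      using that by (auto simp: Bh_def algebra_simps)
    define T where "T = (\<Sum>i<?n. \<Sum>j<?n. if ?adj i j then w $ i * w $ j else 0)"
    have "T \<le> 2 * (w \<bullet> w)"
      using bounded_degree_form_le[of ?adj ?n 2 "\<lambda>i. w $ i"] path_degree_le_2 by (auto simp: T_def norm)
    then have T: "real N / 6 * T \<le> real N / 6 * (2 * (w \<bullet> w))" by (rule mult_left_mono) simp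
    have "w \<bullet> (Bh N *\<^sub>v w) = (\<Sum>i<?n. \<Sum>j<?n. 2 * real N / 3 * (if i = j then w $ i * w $ j else 0)
        + real N / 6 * (if ?adj i j then w $ i * w $ j else 0) - w $ i * w $ j)"
      unfolding form by (intro sum.cong refl) (simp add: entry)
    also have "\<dots> = 2 * real N / 3 * (\<Sum>i<?n. \<Sum>j<?n. if i = j then w $ i * w $ j else 0)
        + real N / 6 * T - (\<Sum>i<?n. \<Sum>j<?n. w $ i * w $ j)"
      unfolding T_def by (simp only: sum.distrib sum_subtractf sum_distrib_left)
    also have "(\<Sum>i<?n. \<Sum>j<?n. if i = j then w $ i * w $ j else 0) = w \<bullet> w"
      by (simp add: norm power2_eq_square)
    also have "(\<Sum>i<?n. \<Sum>j<?n. w $ i * w $ j) = (\<Sum>i<?n. w $ i)^2"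
      by (simp add: power2_eq_square sum_product)
    also have "2 * real N / 3 * (w \<bullet> w) + real N / 6 * T - (\<Sum>i<?n. w $ i)^2 \<le> real N * (w \<bullet> w)"
      using T zero_le_power2[of "\<Sum>i<?n. w $ i"] by linarith
    also have "\<dots> < (2 * real N - 3) * (w \<bullet> w)" using 3 pos by simp
    finally show ?thesis .
  qed
qed

theorem lemma4p3:
  fixes N :: nat and b :: real
  assumes "N \<ge> 2" and "b > 0"
  shows "1 \<le> lambda_max (diag_inv (diag_part (Ah b N)) * Ah b N)
       \<and> lambda_max (diag_inv (diag_part (Ah b N)) * Ah b N) < 3"
proof -
  define d where "d = 2 * real N / 3 - 1"
  define M where "M = diag_inv (diag_part (Ah b N)) * Ah b N"
  have d: "d > 0" using assms(1) by (simp add: d_def)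
  have M: "M = (1 / d) \<cdot>\<^sub>m Bh N" using diag_inv_diag_part_Ah[OF assms] by (simp add: M_def d_def)
  have M_carrier: "M \<in> carrier_mat (N - 1) (N - 1)" using Bh_carrier by (simp add: M)
  have M_symmetric: "transpose_mat M = M" by (simp add: M transpose_smult_mat transpose_Bh)
  have n: "N - 1 > 0" using assms(1) by simp
  have M_form: "u \<bullet> (M *\<^sub>v u) = u \<bullet> (Bh N *\<^sub>v u) / d" if "u \<in> carrier_vec (N - 1)" for u
    using that Bh_carrier[of N] by (simp add: M quadratic_form_sum[of _ "N - 1"] sum_divide_distrib)
  have "1 \<le> lambda_max M"
  proof -
    let ?e = "unit_vec (N - 1) 0"
    have "?e \<bullet> (M *\<^sub>v ?e) = 1"
      using M_form[of ?e] unit_vec_quadratic_form[OF Bh_carrier n] d by (simp add: Bh_def d_def)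
    then show ?thesis using lambda_max_symmetric(2)[OF M_carrier M_symmetric n, of ?e] n by simp
  qed
  moreover have "lambda_max M < 3"
  proof (rule eigenvalue_less_of_quadratic_form_less
      [OF M_carrier lambda_max_symmetric(1)[OF M_carrier M_symmetric n]])
    fix u :: "real vec" assume "u \<in> carrier_vec (N - 1)" "u \<noteq> 0\<^sub>v (N - 1)"
    then show "u \<bullet> (M *\<^sub>v u) < 3 * (u \<bullet> u)"
      using Bh_quadratic_form_less[OF assms(1)] M_form d by (simp add: divide_less_eq d_def algebra_simps)
  qed
  ultimately show ?thesis by (simp add: M_def)
qed

end
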